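(* Let $G=(V,E,w)$ be an undirected weighted graph such that $w(e)<1$ for every $e\in E$ and every vertex has at most $3$ neighbors. Then $\chi_w(G)\le 2$.
   Context: An undirected weighted graph $G=(V,E,w)$ with $w:E\to[0,1]$ is regarded as a weighted digraph in which each edge $\{u,v\}$ gives arcs $(u,v)$ and $(v,u)$ of weight $w(\{u,v\})$. A $k$-coloring is a map $c:V\to\{1,\dots,k\}$, and $c[v]$ denotes the set of vertices with color $c(v)$. For $S\subseteq V$, $d^-_S(v)=\sum_{u\in S,(u,v)\in E}w(u,v)$. A weighted improper $k$-coloring is a $k$-coloring with $d^-_{c[v]}(v)<1$ for every $v$, and $\chi_w(G)$ is the minimum $k$ for which one exists. *)

theory Defs
  imports Complex_Main
begin

definition weighted_graph :: "'a set \<Rightarrow> 'a set set \<Rightarrow> ('a set \<Rightarrow> real) \<Rightarrow> bool" where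
  "weighted_graph V E w \<longleftrightarrow> finite V \<and>
     (\<forall>e\<in>E. \<exists>u v. e = {u, v} \<and> u \<noteq> v \<and> u \<in> V \<and> v \<in> V) \<and>
     (\<forall>e\<in>E. 0 \<le> w e \<and> w e \<le> 1)"

definition nbrs :: "'a set set \<Rightarrow> 'a \<Rightarrow> 'a set" where
  "nbrs E v = {u. {u, v} \<in> E}"

definition in_deg :: "'a set set \<Rightarrow> ('a set \<Rightarrow> real) \<Rightarrow> 'a set \<Rightarrow> 'a \<Rightarrow> real" where
  "in_deg E w S v = (\<Sum>u\<in>{u\<in>S. {u, v} \<in> E}. w {u, v})"

definition weighted_improper_coloring ::
  "'a set \<Rightarrow> 'a set set \<Rightarrow> ('a set \<Rightarrow> real) \<Rightarrow> nat \<Rightarrow> ('a \<Rightarrow> nat) \<Rightarrow> bool" where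
  "weighted_improper_coloring V E w k c \<longleftrightarrow>
     (\<forall>v\<in>V. c v \<in> {1..k}) \<and>
     (\<forall>v\<in>V. in_deg E w {u\<in>V. c u = c v} v < 1)"

definition chi_w :: "'a set \<Rightarrow> 'a set set \<Rightarrow> ('a set \<Rightarrow> real) \<Rightarrow> nat" where
  "chi_w V E w = (LEAST k. \<exists>c. weighted_improper_coloring V E w k c)"

end

theory Submission
  imports Defs
begin

text \<open>Split the vertices into a set \<open>A\<close> and its complement so that the number of edges
  inside one of the two classes is minimal. Moving a single vertex \<open>v\<close> across cannot
  decrease that number, so \<open>v\<close> has at most as many neighbours on its own side as on the
  other; with at most three neighbours this leaves at most one, and a single edge of
  weight below 1 keeps the in-degree of \<open>v\<close> inside its colour class below 1.\<close>

definition monochromatic_edges :: "'a set \<Rightarrow> 'a set set \<Rightarrow> 'a set \<Rightarrow> 'a set set" where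
  "monochromatic_edges V E A = {e\<in>E. e \<subseteq> A \<or> e \<subseteq> V - A}"

lemma weighted_graph_edges_subset:
  assumes "weighted_graph V E w"
  shows "E \<subseteq> Pow V"
  using assms unfolding weighted_graph_def by fastforce

lemma weighted_graph_finite_edges:
  assumes "weighted_graph V E w"
  shows "finite E"
  using assms weighted_graph_edges_subset[OF assms] unfolding weighted_graph_def
  by (meson finite_Pow_iff finite_subset)

lemma weighted_graph_edge_at:
  assumes "weighted_graph V E w" and "e \<in> E" and "v \<in> e"
  shows "\<exists>u. e = {u, v} \<and> u \<in> nbrs E v"
proof -
  obtain a b where "e = {a, b}" using assms(1,2) unfolding weighted_graph_def by blast
  with assms(2,3) show ?thesis unfolding nbrs_def by (auto simp: insert_commute)
qed

lemma nbrs_subset: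
  assumes "weighted_graph V E w"
  shows "nbrs E v \<subseteq> V - {v}"
proof
  fix u assume "u \<in> nbrs E v"
  then obtain a b where "{u, v} = {a, b}" "a \<noteq> b" "a \<in> V" "b \<in> V"
    using assms unfolding nbrs_def weighted_graph_def by blast
  then show "u \<in> V - {v}" by (metis DiffI doubleton_eq_iff singletonD)
qed

lemma monochromatic_edges_complement:
  assumes "weighted_graph V E w" and "A \<subseteq> V"
  shows "monochromatic_edges V E (V - A) = monochromatic_edges V E A"
  using weighted_graph_edges_subset[OF assms(1)] assms(2)
  unfolding monochromatic_edges_def by auto

text \<open>Moving \<open>v\<close> out of \<open>A\<close> turns its edges into \<open>A\<close> into cut edges and its cut edges
  into monochromatic ones; all other edges keep their status.\<close>

lemma card_monochromatic_edges_move: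
  assumes wg: "weighted_graph V E w" and "A \<subseteq> V" and "v \<in> A"
  shows "card (monochromatic_edges V E A) + card (nbrs E v - A)
       = card (monochromatic_edges V E (A - {v})) + card (nbrs E v \<inter> A)"
proof -
  let ?M = "monochromatic_edges V E"
  define Ev where "Ev = {e\<in>E. v \<in> e}"
  have N: "nbrs E v \<subseteq> V - {v}" by (rule nbrs_subset[OF wg])
  have inj: "inj_on (\<lambda>u. {u, v}) X" for X by (rule inj_onI) (metis doubleton_eq_iff)
  have at_v: "\<exists>u. e = {u, v} \<and> u \<in> nbrs E v" if "e \<in> Ev" for e
    using weighted_graph_edge_at[OF wg] that unfolding Ev_def by blast
  have "?M A \<inter> Ev = (\<lambda>u. {u, v}) ` (nbrs E v \<inter> A)"
    using at_v assms(3) unfolding monochromatic_edges_def Ev_def nbrs_def by fastforce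
  then have at_A: "card (?M A \<inter> Ev) = card (nbrs E v \<inter> A)"
    by (simp add: card_image[OF inj])
  have "?M (A - {v}) \<inter> Ev = (\<lambda>u. {u, v}) ` (nbrs E v - A)"
    using at_v N assms(2,3) unfolding monochromatic_edges_def Ev_def nbrs_def by fastforce
  then have at_A': "card (?M (A - {v}) \<inter> Ev) = card (nbrs E v - A)"
    by (simp add: card_image[OF inj])
  have rest: "?M A - Ev = ?M (A - {v}) - Ev"
    unfolding monochromatic_edges_def Ev_def by auto
  have fin: "finite (?M X)" for X
    using weighted_graph_finite_edges[OF wg] unfolding monochromatic_edges_def by simp
  show ?thesis
    using card_Int_Diff[OF fin, of A Ev] card_Int_Diff[OF fin, of "A - {v}" Ev]
      at_A at_A' rest by simp
qed

lemma minimal_monochromatic_edges_nbrs: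
  assumes wg: "weighted_graph V E w" and "A \<subseteq> V" and "v \<in> A"
    and min: "\<And>B. B \<subseteq> V \<Longrightarrow> card (monochromatic_edges V E A) \<le> card (monochromatic_edges V E B)"
  shows "card (nbrs E v \<inter> A) \<le> card (nbrs E v - A)"
proof -
  have "card (monochromatic_edges V E A) \<le> card (monochromatic_edges V E (A - {v}))"
    using min assms(2) by blast
  then show ?thesis using card_monochromatic_edges_move[OF assms(1-3)] by linarith
qed

lemma exists_2_coloring_few_same_colour_nbrs:
  assumes wg: "weighted_graph V E w"
  shows "\<exists>c. \<forall>v\<in>V. c v \<in> {1..2::nat} \<and>
           2 * card {u\<in>V. c u = c v \<and> u \<in> nbrs E v} \<le> card (nbrs E v)"
proof -
  let ?M = "monochromatic_edges V E"
  obtain A where A: "A \<subseteq> V" and min: "\<And>B. B \<subseteq> V \<Longrightarrow> card (?M A) \<le> card (?M B)"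
    using ex_has_least_nat[of "\<lambda>A. A \<subseteq> V" "{}" "\<lambda>A. card (?M A)"] by blast
  have min': "card (?M (V - A)) \<le> card (?M B)" if "B \<subseteq> V" for B
    using min[OF that] monochromatic_edges_complement[OF wg A] by simp
  have fin: "finite (nbrs E v)" for v
    using nbrs_subset[OF wg] wg unfolding weighted_graph_def by (meson finite_Diff finite_subset)
  have half: "2 * card (nbrs E v \<inter> S) \<le> card (nbrs E v)"
    if "card (nbrs E v \<inter> S) \<le> card (nbrs E v - S)" for v S
    using that card_Int_Diff[OF fin, of v S] by linarith
  define c where "c v = (if v \<in> A then 1 else 2::nat)" for v
  have "2 * card {u\<in>V. c u = c v \<and> u \<in> nbrs E v} \<le> card (nbrs E v)" if "v \<in> V" for v
  proof (cases "v \<in> A")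
    case True
    then have "{u\<in>V. c u = c v \<and> u \<in> nbrs E v} = nbrs E v \<inter> A"
      using A nbrs_subset[OF wg] unfolding c_def by auto
    then show ?thesis
      using half minimal_monochromatic_edges_nbrs[OF wg A True min] by simp
  next
    case False
    then have "{u\<in>V. c u = c v \<and> u \<in> nbrs E v} = nbrs E v \<inter> (V - A)"
      using nbrs_subset[OF wg] unfolding c_def by auto
    moreover have "nbrs E v - (V - A) = nbrs E v \<inter> A"
      using nbrs_subset[OF wg] by auto
    ultimately show ?thesis
      using half minimal_monochromatic_edges_nbrs[where A = "V - A" and v = v, OF wg _ _ min'] \<open>v \<in> V\<close> False
      by auto
  qed
  moreover have "c v \<in> {1..2}" for v unfolding c_def by simp
  ultimately show ?thesis by blast
qed

lemma in_deg_less_one: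
  assumes "finite S" and "card {u\<in>S. {u, v} \<in> E} \<le> 1" and "\<forall>e\<in>E. w e < 1"
  shows "in_deg E w S v < 1"
proof (cases "{u\<in>S. {u, v} \<in> E} = {}")
  case False
  moreover have "finite {u\<in>S. {u, v} \<in> E}" using assms(1) by simp
  ultimately have "card {u\<in>S. {u, v} \<in> E} = 1"
    using assms(2) by (simp add: card_gt_0_iff le_antisym Suc_leI)
  then obtain u where "{u\<in>S. {u, v} \<in> E} = {u}" by (rule card_1_singletonE)
  then show ?thesis using assms(3) unfolding in_deg_def by auto
qed (simp add: in_deg_def del: Collect_empty_eq)

lemma chi_w_le:
  assumes "weighted_improper_coloring V E w k c"
  shows "chi_w V E w \<le> k"
  unfolding chi_w_def using assms by (metis (mono_tags, lifting) Least_le)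

theorem lemma3p1:
  fixes V :: "'a set" and E :: "'a set set" and w :: "'a set \<Rightarrow> real"
  assumes "weighted_graph V E w"
    and "\<forall>e\<in>E. w e < 1"
    and "\<forall>v\<in>V. card (nbrs E v) \<le> 3"
  shows "chi_w V E w \<le> 2"
proof -
  obtain c where c: "\<forall>v\<in>V. c v \<in> {1..2::nat} \<and>
      2 * card {u\<in>V. c u = c v \<and> u \<in> nbrs E v} \<le> card (nbrs E v)"
    using exists_2_coloring_few_same_colour_nbrs[OF assms(1)] by blast
  have "in_deg E w {u\<in>V. c u = c v} v < 1" if "v \<in> V" for v
  proof (rule in_deg_less_one)
    show "finite {u\<in>V. c u = c v}" using assms(1) unfolding weighted_graph_def by simp
    have "{u\<in>{u\<in>V. c u = c v}. {u, v} \<in> E} = {u\<in>V. c u = c v \<and> u \<in> nbrs E v}"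
      unfolding nbrs_def by auto
    then show "card {u\<in>{u\<in>V. c u = c v}. {u, v} \<in> E} \<le> 1"
      using c assms(3) that by fastforce
  qed (use assms(2) in simp)
  with c have "weighted_improper_coloring V E w 2 c"
    unfolding weighted_improper_coloring_def by blast
  then show ?thesis by (rule chi_w_le)
qed

end
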